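(* As $n\to\infty$, \[ 2\log s(n,2) \sim \log p(n,2) \sim \log m(n,2). \]
   Context: For integers $0\le r\le n$, $m(n,r)$ denotes the number of matroids of rank $r$ on the fixed ground set $[n]=\{1,\dots,n\}$, $p(n,r)$ the number of those that are paving, and $s(n,r)$ the number of those that are sparse paving. A matroid of rank $r$ is paving if every circuit has cardinality at least $r$; it is sparse paving if both it and its dual are paving (equivalently, every $r$-subset of the ground set is either a basis or a circuit-hyperplane). $\log$ denotes the logarithm to base $2$, and $f\sim g$ means $f/g\to 1$. *)

theory Defs
  imports Complex_Main "HOL-Library.Landau_Symbols"
begin

definition matroid_indep :: "'a set \<Rightarrow> 'a set set \<Rightarrow> bool" where
  "matroid_indep E I \<longleftrightarrow> finite E \<and> (\<forall>X\<in>I. X \<subseteq> E) \<and> {} \<in> I \<and>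
     (\<forall>X Y. X \<in> I \<and> Y \<subseteq> X \<longrightarrow> Y \<in> I) \<and>
     (\<forall>X Y. X \<in> I \<and> Y \<in> I \<and> card X < card Y \<longrightarrow> (\<exists>y\<in>Y - X. insert y X \<in> I))"

definition matroid_rank :: "'a set set \<Rightarrow> nat" where
  "matroid_rank I = Max (card ` I)"

definition matroid_basis :: "'a set set \<Rightarrow> 'a set \<Rightarrow> bool" where
  "matroid_basis I B \<longleftrightarrow> B \<in> I \<and> (\<forall>X\<in>I. \<not> B \<subset> X)"

definition matroid_circuit :: "'a set \<Rightarrow> 'a set set \<Rightarrow> 'a set \<Rightarrow> bool" where
  "matroid_circuit E I C \<longleftrightarrow> C \<subseteq> E \<and> C \<notin> I \<and> (\<forall>D. D \<subset> C \<longrightarrow> D \<in> I)"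

definition dual_indep :: "'a set \<Rightarrow> 'a set set \<Rightarrow> 'a set set" where
  "dual_indep E I = {X. X \<subseteq> E \<and> (\<exists>B. matroid_basis I B \<and> X \<inter> B = {})}"

definition paving :: "'a set \<Rightarrow> 'a set set \<Rightarrow> bool" where
  "paving E I \<longleftrightarrow> (\<forall>C. matroid_circuit E I C \<longrightarrow> card C \<ge> matroid_rank I)"

definition sparse_paving :: "'a set \<Rightarrow> 'a set set \<Rightarrow> bool" where
  "sparse_paving E I \<longleftrightarrow> paving E I \<and> paving E (dual_indep E I)"

definition mcount :: "nat \<Rightarrow> nat \<Rightarrow> nat" where
  "mcount n r = card {I. matroid_indep {1..n} I \<and> matroid_rank I = r}"

definition pcount :: "nat \<Rightarrow> nat \<Rightarrow> nat" where
  "pcount n r = card {I. matroid_indep {1..n} I \<and> matroid_rank I = r \<and> paving {1..n} I}"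

definition scount :: "nat \<Rightarrow> nat \<Rightarrow> nat" where
  "scount n r = card {I. matroid_indep {1..n} I \<and> matroid_rank I = r \<and> sparse_paving {1..n} I}"

end

theory Submission
  imports Defs "HOL-Library.FuncSet" "HOL-Combinatorics.Permutations" "HOL-Real_Asymp.Real_Asymp"
begin

text \<open>
  A rank-2 matroid is determined by its loops and by its parallel classes, so recording for every
  element the least element parallel to it (and 0 for a loop) shows \<open>m(n,2) \<le> (n+1)^n\<close>. A sparse
  paving matroid of rank 2 has no loops and no parallel class with three elements (the complement of
  such a class would be a too small circuit of the dual), so it is determined by the set of at most
  \<open>n/2\<close> elements that are not the least of their class together with their partners, whence
  \<open>s(n,2) \<le> 2^n n^(n/2)\<close>.
  Conversely, every map \<open>f\<close> on the ground set defines the rank-2 matroid whose independent sets are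
  the sets of at most two elements on which \<open>f\<close> is injective. It is paving once \<open>f\<close> is not constant,
  and sparse paving once no fibre of \<open>f\<close> has three elements. Extending maps
  \<open>{k+1..n} \<rightarrow> {1..k}\<close>, resp. permutations of \<open>{1..k}\<close>, by the identity gives
  \<open>p(n,2) \<ge> k^(n-k)\<close> and \<open>s(n,2) \<ge> k!\<close>; the choices \<open>k \<approx> n / ln n\<close> and \<open>k = \<lfloor>n/2\<rfloor>\<close> give
  \<open>log m \<sim> log p \<sim> n log n\<close> and \<open>log s \<sim> (n log n) / 2\<close>.
\<close>

section \<open>Rank, bases and duality\<close>

lemma matroid_indep_finite: "matroid_indep E I \<Longrightarrow> finite I"
  unfolding matroid_indep_def by (metis Pow_iff finite_Pow_iff rev_finite_subset subsetI)

lemma matroid_indep_finite_ground: "matroid_indep E I \<Longrightarrow> finite E"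
  unfolding matroid_indep_def by blast

lemma matroid_indep_subset: "matroid_indep E I \<Longrightarrow> X \<in> I \<Longrightarrow> X \<subseteq> E"
  unfolding matroid_indep_def by blast

lemma matroid_indep_finite_member: "matroid_indep E I \<Longrightarrow> X \<in> I \<Longrightarrow> finite X"
  using matroid_indep_subset matroid_indep_finite_ground finite_subset by metis

lemma matroid_indep_downward: "matroid_indep E I \<Longrightarrow> X \<in> I \<Longrightarrow> Y \<subseteq> X \<Longrightarrow> Y \<in> I"
  unfolding matroid_indep_def by blast

lemma matroid_indep_empty: "matroid_indep E I \<Longrightarrow> {} \<in> I"
  unfolding matroid_indep_def by blast

lemma matroid_indep_augment:
  "matroid_indep E I \<Longrightarrow> X \<in> I \<Longrightarrow> Y \<in> I \<Longrightarrow> card X < card Y \<Longrightarrow> \<exists>y\<in>Y - X. insert y X \<in> I"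
  unfolding matroid_indep_def by blast

lemma finite_matroids: "finite E \<Longrightarrow> finite {I. matroid_indep E I \<and> P I}"
  by (rule finite_subset[of _ "Pow (Pow E)"]) (auto dest: matroid_indep_subset)

lemma card_le_matroid_rank: "matroid_indep E I \<Longrightarrow> X \<in> I \<Longrightarrow> card X \<le> matroid_rank I"
  unfolding matroid_rank_def by (simp add: matroid_indep_finite)

lemma matroid_rank_attained:
  assumes "matroid_indep E I"
  obtains X where "X \<in> I" "card X = matroid_rank I"
proof -
  have "Max (card ` I) \<in> card ` I"
    using assms matroid_indep_finite matroid_indep_empty by (intro Max_in) auto
  thus thesis using that unfolding matroid_rank_def by auto
qed

lemma matroid_basis_if_card_rank:
  "matroid_indep E I \<Longrightarrow> X \<in> I \<Longrightarrow> card X = matroid_rank I \<Longrightarrow> matroid_basis I X"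
  unfolding matroid_basis_def
  by (metis card_le_matroid_rank matroid_indep_finite_member not_less psubset_card_mono)

lemma card_matroid_basis:
  assumes M: "matroid_indep E I" and B: "matroid_basis I B"
  shows "card B = matroid_rank I"
proof (rule ccontr)
  have BI: "B \<in> I" and maximal: "\<And>X. X \<in> I \<Longrightarrow> \<not> B \<subset> X"
    using B unfolding matroid_basis_def by auto
  obtain X where X: "X \<in> I" "card X = matroid_rank I" using matroid_rank_attained[OF M] .
  assume "card B \<noteq> matroid_rank I"
  hence "card B < card X" using card_le_matroid_rank[OF M BI] X(2) by simp
  then obtain y where "y \<in> X - B" "insert y B \<in> I" using matroid_indep_augment[OF M BI X(1)] by blast
  thus False using maximal by blast
qed

lemma matroid_rank_dual:
  assumes M: "matroid_indep E I"
  shows "matroid_rank (dual_indep E I) = card E - matroid_rank I"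
proof -
  have fin: "finite E" using matroid_indep_finite_ground[OF M] .
  have card_compl: "card (E - B) = card E - matroid_rank I" if B: "matroid_basis I B" for B
  proof -
    have "B \<subseteq> E" using B matroid_indep_subset[OF M] unfolding matroid_basis_def by blast
    thus ?thesis using card_matroid_basis[OF M B] fin by (simp add: card_Diff_subset finite_subset)
  qed
  obtain X where X: "X \<in> I" "card X = matroid_rank I" using matroid_rank_attained[OF M] .
  have B: "matroid_basis I X" using matroid_basis_if_card_rank[OF M X] .
  show ?thesis unfolding matroid_rank_def[of "dual_indep E I"]
  proof (rule Max_eqI)
    show "finite (card ` dual_indep E I)"
      using fin unfolding dual_indep_def by (auto intro: finite_subset[of _ "Pow E"])
    show "card E - matroid_rank I \<in> card ` dual_indep E I"
      using B card_compl[OF B] unfolding dual_indep_def by (intro image_eqI[of _ _ "E - X"]) auto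
    fix m assume "m \<in> card ` dual_indep E I"
    then obtain Y B where "m = card Y" "Y \<subseteq> E - B" "matroid_basis I B"
      unfolding dual_indep_def by blast
    thus "m \<le> card E - matroid_rank I" using card_compl fin by (metis card_mono finite_Diff)
  qed
qed

lemma ex_minimal_not_in:
  "finite A \<Longrightarrow> A \<notin> J \<Longrightarrow> \<exists>C\<subseteq>A. C \<notin> J \<and> (\<forall>D. D \<subset> C \<longrightarrow> D \<in> J)"
proof (induction A rule: finite_psubset_induct)
  case (psubset A)
  show ?case
  proof (cases "\<forall>D. D \<subset> A \<longrightarrow> D \<in> J")
    case True thus ?thesis using psubset.prems by blast
  next
    case False
    then obtain D where "D \<subset> A" "D \<notin> J" by blast
    thus ?thesis using psubset.IH by (meson order.trans psubset_imp_subset)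
  qed
qed

lemma paving_loop_free:
  assumes M: "matroid_indep E I" and rank: "1 < matroid_rank I" and P: "paving E I" and x: "x \<in> E"
  shows "{x} \<in> I"
proof (rule ccontr)
  assume "{x} \<notin> I"
  hence "matroid_circuit E I {x}"
    using x matroid_indep_empty[OF M] unfolding matroid_circuit_def by (auto simp: subset_singleton_iff)
  hence "matroid_rank I \<le> card {x}" using P unfolding paving_def by blast
  thus False using rank by simp
qed

section \<open>Parallel classes of a rank-2 matroid\<close>

definition parallel :: "'a set set \<Rightarrow> 'a \<Rightarrow> 'a \<Rightarrow> bool" where
  "parallel I x y \<longleftrightarrow> {x} \<in> I \<and> {y} \<in> I \<and> (x = y \<or> {x, y} \<notin> I)"

lemma parallel_refl: "{x} \<in> I \<Longrightarrow> parallel I x x"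
  unfolding parallel_def by simp

lemma parallel_sym: "parallel I x y \<Longrightarrow> parallel I y x"
  unfolding parallel_def by (metis insert_commute)

lemma parallel_trans:
  assumes M: "matroid_indep E I" and xy: "parallel I x y" and yz: "parallel I y z"
  shows "parallel I x z"
proof (cases "x = y \<or> y = z \<or> x = z")
  case True thus ?thesis using xy yz parallel_refl unfolding parallel_def by auto
next
  case False
  have "{x, z} \<notin> I"
  proof
    assume "{x, z} \<in> I"
    moreover have "{y} \<in> I" using xy unfolding parallel_def by blast
    ultimately obtain w where "w \<in> {x, z} - {y}" "insert w {y} \<in> I"
      using matroid_indep_augment[OF M, of "{y}" "{x, z}"] False by auto
    hence "{x, y} \<in> I \<or> {y, z} \<in> I" by (auto simp: insert_commute)
    thus False using xy yz False unfolding parallel_def by blast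
  qed
  thus ?thesis using xy yz unfolding parallel_def by blast
qed

lemma indep_rank2_iff:
  assumes M: "matroid_indep E I" and rank: "matroid_rank I = 2"
  shows "X \<in> I \<longleftrightarrow> X \<subseteq> E \<and> card X \<le> 2 \<and> (\<forall>x\<in>X. {x} \<in> I) \<and> (\<forall>x\<in>X. \<forall>y\<in>X. parallel I x y \<longrightarrow> x = y)"
    (is "_ \<longleftrightarrow> ?rhs")
proof
  assume X: "X \<in> I"
  have "{x} \<in> I" if "x \<in> X" for x
    using that matroid_indep_downward[OF M X] by simp
  moreover have "x = y" if "x \<in> X" "y \<in> X" "parallel I x y" for x y
    using that matroid_indep_downward[OF M X, of "{x, y}"] unfolding parallel_def by simp
  ultimately show ?rhs
    using matroid_indep_subset[OF M X] card_le_matroid_rank[OF M X] rank by simp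
next
  assume rhs: ?rhs
  hence "finite X" using matroid_indep_finite_ground[OF M] finite_subset by blast
  have "card X = 0 \<or> card X = 1 \<or> card X = 2" using rhs by linarith
  thus "X \<in> I"
  proof (elim disjE)
    assume "card X = 0"
    thus ?thesis using \<open>finite X\<close> matroid_indep_empty[OF M] by simp
  next
    assume "card X = 1"
    then obtain x where "X = {x}" by (rule card_1_singletonE)
    thus ?thesis using rhs by simp
  next
    assume "card X = 2"
    then obtain x y where X: "X = {x, y}" "x \<noteq> y" by (meson card_2_iff)
    hence "x \<in> X" "y \<in> X" by simp_all
    hence "{x} \<in> I" "{y} \<in> I" "\<not> parallel I x y" using rhs \<open>x \<noteq> y\<close> by blast+
    thus ?thesis using X unfolding parallel_def by simp
  qed
qed

text \<open>Loops are sent to \<open>0\<close>, which lies outside the ground sets \<open>{1..n}\<close> considered below.\<close>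

definition parallel_rep :: "nat set set \<Rightarrow> nat \<Rightarrow> nat" where
  "parallel_rep I x = (if {x} \<in> I then LEAST y. parallel I x y else 0)"

lemma parallel_rep: "{x} \<in> I \<Longrightarrow> parallel I x (parallel_rep I x)"
  unfolding parallel_rep_def using LeastI[of "parallel I x", OF parallel_refl] by simp

lemma parallel_rep_le: "parallel_rep I x \<le> x"
  unfolding parallel_rep_def using Least_le[of "parallel I x", OF parallel_refl] by simp

lemma parallel_rep_in_ground: "matroid_indep E I \<Longrightarrow> {x} \<in> I \<Longrightarrow> parallel_rep I x \<in> E"
  using parallel_rep[of x I] matroid_indep_subset[of E I "{parallel_rep I x}"] unfolding parallel_def by simp

lemma parallel_rep_eq_0_iff:
  assumes "matroid_indep E I" "0 \<notin> E"
  shows "parallel_rep I x = 0 \<longleftrightarrow> {x} \<notin> I"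
proof (cases "{x} \<in> I")
  case True thus ?thesis using parallel_rep_in_ground[OF assms(1) True] assms(2) by metis
next
  case False thus ?thesis by (simp add: parallel_rep_def)
qed

lemma parallel_rep_eq_iff:
  assumes M: "matroid_indep E I" and "{x} \<in> I" "{y} \<in> I"
  shows "parallel_rep I x = parallel_rep I y \<longleftrightarrow> parallel I x y"
proof
  assume "parallel_rep I x = parallel_rep I y"
  hence "parallel I x (parallel_rep I y)" using parallel_rep[OF \<open>{x} \<in> I\<close>] by simp
  thus "parallel I x y" by (rule parallel_trans[OF M _ parallel_sym[OF parallel_rep[OF \<open>{y} \<in> I\<close>]]])
next
  assume "parallel I x y"
  hence "parallel I x z \<longleftrightarrow> parallel I y z" for z
    using parallel_trans[OF M parallel_sym[OF \<open>parallel I x y\<close>], of z]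
      parallel_trans[OF M \<open>parallel I x y\<close>, of z] by blast
  hence "parallel I x = parallel I y" by (simp add: fun_eq_iff)
  thus "parallel_rep I x = parallel_rep I y" using assms unfolding parallel_rep_def by simp
qed

lemma rank2_matroid_eqI:
  assumes I: "matroid_indep E I" "matroid_rank I = 2" and J: "matroid_indep E J" "matroid_rank J = 2"
    and "0 \<notin> E" and rep: "\<And>x. x \<in> E \<Longrightarrow> parallel_rep I x = parallel_rep J x"
  shows "I = J"
proof -
  have loops: "{x} \<in> I \<longleftrightarrow> {x} \<in> J" if "x \<in> E" for x
    using rep[OF that] parallel_rep_eq_0_iff[OF I(1) \<open>0 \<notin> E\<close>] parallel_rep_eq_0_iff[OF J(1) \<open>0 \<notin> E\<close>]
    by metis
  have par: "parallel I x y \<longleftrightarrow> parallel J x y" if "x \<in> E" "y \<in> E" for x y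
  proof (cases "{x} \<in> I \<and> {y} \<in> I")
    case True
    hence "{x} \<in> J \<and> {y} \<in> J" using loops that by blast
    have "parallel I x y \<longleftrightarrow> parallel_rep I x = parallel_rep I y"
      using parallel_rep_eq_iff[OF I(1)] True by simp
    also have "\<dots> \<longleftrightarrow> parallel_rep J x = parallel_rep J y" using rep that by simp
    also have "\<dots> \<longleftrightarrow> parallel J x y" using parallel_rep_eq_iff[OF J(1)] \<open>{x} \<in> J \<and> {y} \<in> J\<close> by simp
    finally show ?thesis .
  next
    case False
    thus ?thesis using loops that unfolding parallel_def by blast
  qed
  have "X \<in> I \<longleftrightarrow> X \<in> J" for X
  proof (cases "X \<subseteq> E")
    case True
    hence "(\<forall>x\<in>X. {x} \<in> I) \<longleftrightarrow> (\<forall>x\<in>X. {x} \<in> J)"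
      and "(\<forall>x\<in>X. \<forall>y\<in>X. parallel I x y \<longrightarrow> x = y) \<longleftrightarrow> (\<forall>x\<in>X. \<forall>y\<in>X. parallel J x y \<longrightarrow> x = y)"
      using loops par by (meson subsetD)+
    thus ?thesis using indep_rank2_iff[OF I, of X] indep_rank2_iff[OF J, of X] by simp
  next
    case False
    thus ?thesis using indep_rank2_iff[OF I, of X] indep_rank2_iff[OF J, of X] by simp
  qed
  thus ?thesis by blast
qed

lemma mcount_le: "mcount n 2 \<le> (n + 1) ^ n"
proof -
  let ?E = "{1..n}" and ?M = "{I. matroid_indep {1..n} I \<and> matroid_rank I = 2}"
  let ?code = "\<lambda>I. restrict (parallel_rep I) ?E"
  have "inj_on ?code ?M"
  proof (rule inj_onI)
    fix I J assume I: "I \<in> ?M" and J: "J \<in> ?M" and eq: "?code I = ?code J"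
    have "parallel_rep I x = parallel_rep J x" if "x \<in> ?E" for x
      using fun_cong[OF eq, of x] that by simp
    thus "I = J" using I J by (intro rank2_matroid_eqI[of ?E]) auto
  qed
  moreover have "?code ` ?M \<subseteq> ?E \<rightarrow>\<^sub>E {0..n}"
    by (auto simp: PiE_iff intro: order_trans[OF parallel_rep_le])
  moreover have "finite (?E \<rightarrow>\<^sub>E {0..n})" by (intro finite_PiE) auto
  ultimately have "card ?M \<le> card (?E \<rightarrow>\<^sub>E {0..n})" by (rule card_inj_on_le)
  also have "\<dots> = (n + 1) ^ n" by (simp add: card_PiE)
  finally show ?thesis unfolding mcount_def .
qed

lemma pcount_le_mcount: "pcount n r \<le> mcount n r"
  unfolding pcount_def mcount_def by (intro card_mono finite_matroids) auto

section \<open>Sparse paving matroids of rank 2\<close>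

lemma sparse_paving_rank2_no_parallel_triple:
  assumes M: "matroid_indep E I" "matroid_rank I = 2" and D: "paving E (dual_indep E I)"
    and abc: "{a, b, c} \<subseteq> E" "card {a, b, c} = 3"
    and dep: "{a, b} \<notin> I" "{b, c} \<notin> I" "{a, c} \<notin> I"
  shows False
proof -
  let ?A = "E - {a, b, c}"
  have fin: "finite E" using matroid_indep_finite_ground[OF M(1)] .
  have "?A \<notin> dual_indep E I"
  proof
    assume "?A \<in> dual_indep E I"
    then obtain B where B: "matroid_basis I B" "?A \<inter> B = {}" unfolding dual_indep_def by blast
    have BI: "B \<in> I" using B(1) unfolding matroid_basis_def by blast
    obtain u v where uv: "B = {u, v}" "u \<noteq> v"
      using card_matroid_basis[OF M(1) B(1)] M(2) by (auto simp: card_2_iff)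
    have "u \<in> {a, b, c}" "v \<in> {a, b, c}" using uv(1) B(2) matroid_indep_subset[OF M(1) BI] by blast+
    hence "(u = a \<or> u = b \<or> u = c) \<and> (v = a \<or> v = b \<or> v = c)" by simp
    thus False using BI dep uv by (elim conjE disjE) (simp_all add: insert_commute)
  qed
  then obtain C where C: "C \<subseteq> ?A" "C \<notin> dual_indep E I" "\<forall>D. D \<subset> C \<longrightarrow> D \<in> dual_indep E I"
    using ex_minimal_not_in[OF finite_Diff[OF fin], of "{a, b, c}" "dual_indep E I"] by blast
  have "matroid_circuit E (dual_indep E I) C" unfolding matroid_circuit_def using C by blast
  hence "card E - 2 \<le> card C" using D M unfolding paving_def by (simp add: matroid_rank_dual)
  moreover have "card C \<le> card E - 3"
    using card_mono[OF _ C(1)] abc fin by (simp add: card_Diff_subset)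
  moreover have "3 \<le> card E" using card_mono[OF fin abc(1)] abc(2) by simp
  ultimately show False by linarith
qed

lemma sparse_paving_rank2_moved:
  assumes M: "matroid_indep E I" "matroid_rank I = 2" and S: "sparse_paving E I"
  defines "T \<equiv> {x \<in> E. parallel_rep I x \<noteq> x}"
  shows "inj_on (parallel_rep I) T" and "parallel_rep I ` T \<subseteq> E - T"
proof -
  have loopless: "{x} \<in> I" if "x \<in> E" for x
    using paving_loop_free[OF M(1) _ _ that] M(2) S unfolding sparse_paving_def by simp
  have rep_E: "parallel_rep I x \<in> E" if "x \<in> E" for x
    using parallel_rep_in_ground[OF M(1) loopless[OF that]] .
  have rep_rep: "parallel_rep I (parallel_rep I x) = parallel_rep I x" if "x \<in> E" for x
    using parallel_rep_eq_iff[OF M(1) loopless[OF rep_E[OF that]] loopless[OF that]]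
      parallel_sym[OF parallel_rep[OF loopless[OF that]]] by simp
  show "parallel_rep I ` T \<subseteq> E - T" using rep_E rep_rep unfolding T_def by auto
  show "inj_on (parallel_rep I) T"
  proof (rule inj_onI, rule ccontr)
    fix x y assume x: "x \<in> T" and y: "y \<in> T" and eq: "parallel_rep I x = parallel_rep I y" and "x \<noteq> y"
    let ?z = "parallel_rep I x"
    have "x \<in> E" "y \<in> E" "?z \<noteq> x" "?z \<noteq> y" using x y eq unfolding T_def by auto
    have "parallel I x ?z" "parallel I y ?z" "parallel I x y"
      using parallel_rep[OF loopless[OF \<open>x \<in> E\<close>]] parallel_rep[OF loopless[OF \<open>y \<in> E\<close>]] eq
        parallel_rep_eq_iff[OF M(1) loopless[OF \<open>x \<in> E\<close>] loopless[OF \<open>y \<in> E\<close>]] by simp_all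
    hence "{x, y} \<notin> I" "{y, ?z} \<notin> I" "{x, ?z} \<notin> I"
      using \<open>x \<noteq> y\<close> \<open>?z \<noteq> x\<close> \<open>?z \<noteq> y\<close> unfolding parallel_def by auto
    moreover have "{x, y, ?z} \<subseteq> E" "card {x, y, ?z} = 3"
      using \<open>x \<in> E\<close> \<open>y \<in> E\<close> rep_E \<open>x \<noteq> y\<close> \<open>?z \<noteq> x\<close> \<open>?z \<noteq> y\<close> by auto
    ultimately show False
      using sparse_paving_rank2_no_parallel_triple[OF M] S unfolding sparse_paving_def by blast
  qed
qed

lemma card_moved_sparse_paving_rank2:
  assumes M: "matroid_indep E I" "matroid_rank I = 2" "sparse_paving E I"
  shows "2 * card {x \<in> E. parallel_rep I x \<noteq> x} \<le> card E"
proof -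
  let ?T = "{x \<in> E. parallel_rep I x \<noteq> x}"
  note moved = sparse_paving_rank2_moved[OF M]
  have fin: "finite E" using matroid_indep_finite_ground[OF M(1)] .
  have "2 * card ?T = card ?T + card (parallel_rep I ` ?T)" using card_image[OF moved(1)] by simp
  also have "\<dots> = card (?T \<union> parallel_rep I ` ?T)"
    using moved(2) fin by (subst card_Un_disjoint) auto
  also have "\<dots> \<le> card E" using moved(2) fin by (intro card_mono) auto
  finally show ?thesis .
qed

lemma card_maps_on_small_subsets:
  assumes n: "1 \<le> n"
  shows "card (SIGMA T:{T. T \<subseteq> {1..n} \<and> 2 * card T \<le> n}. T \<rightarrow>\<^sub>E {1..n}) \<le> 2 ^ n * n ^ (n div 2)"
proof -
  let ?E = "{1..n}" and ?A = "{T. T \<subseteq> {1..n} \<and> 2 * card T \<le> n}"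
  have finA: "finite ?A" by (rule finite_subset[of _ "Pow ?E"]) auto
  have "card (Sigma ?A (\<lambda>T. T \<rightarrow>\<^sub>E ?E)) = (\<Sum>T\<in>?A. card (T \<rightarrow>\<^sub>E ?E))"
    using finA by (intro card_SigmaI) (auto intro!: finite_PiE intro: finite_subset)
  also have "\<dots> = (\<Sum>T\<in>?A. n ^ card T)"
    by (intro sum.cong refl) (auto simp: card_PiE dest: finite_subset[OF _ finite_atLeastAtMost])
  also have "\<dots> \<le> (\<Sum>T\<in>?A. n ^ (n div 2))"
    using n by (intro sum_mono power_increasing) auto
  also have "\<dots> = card ?A * n ^ (n div 2)" by simp
  also have "\<dots> \<le> 2 ^ n * n ^ (n div 2)"
  proof (rule mult_right_mono)
    have "card ?A \<le> card (Pow ?E)" by (rule card_mono) auto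
    thus "card ?A \<le> 2 ^ n" by (simp add: card_Pow)
  qed simp
  finally show ?thesis .
qed

lemma scount_le:
  assumes "1 \<le> n"
  shows "scount n 2 \<le> 2 ^ n * n ^ (n div 2)"
proof -
  let ?E = "{1..n}" and ?S = "{I. matroid_indep {1..n} I \<and> matroid_rank I = 2 \<and> sparse_paving {1..n} I}"
  let ?T = "\<lambda>I. {x \<in> ?E. parallel_rep I x \<noteq> x}"
  let ?code = "\<lambda>I. (?T I, restrict (parallel_rep I) (?T I))"
  let ?B = "SIGMA T:{T. T \<subseteq> {1..n} \<and> 2 * card T \<le> n}. T \<rightarrow>\<^sub>E ?E"
  have "inj_on ?code ?S"
  proof (rule inj_onI)
    fix I J assume I: "I \<in> ?S" and J: "J \<in> ?S" and eq: "?code I = ?code J"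
    have T: "?T I = ?T J" using arg_cong[OF eq, of fst] by (simp only: fst_conv)
    have R: "restrict (parallel_rep I) (?T I) = restrict (parallel_rep J) (?T J)"
      using arg_cong[OF eq, of snd] by (simp only: snd_conv)
    have "parallel_rep I x = parallel_rep J x" if x: "x \<in> ?E" for x
    proof (cases "x \<in> ?T I")
      case True
      hence "x \<in> ?T J" using T by blast
      thus ?thesis using fun_cong[OF R, of x] True by simp
    next
      case False
      hence "x \<notin> ?T J" using T by blast
      thus ?thesis using False x by simp
    qed
    thus "I = J" using I J by (intro rank2_matroid_eqI[of ?E]) auto
  qed
  moreover have "?code ` ?S \<subseteq> ?B"
    using card_moved_sparse_paving_rank2 sparse_paving_rank2_moved(2) by fastforce
  moreover have "finite ?B"
    by (intro finite_SigmaI finite_PiE) (auto intro: finite_subset[of _ "Pow ?E"] finite_subset)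
  ultimately have "card ?S \<le> card ?B" by (rule card_inj_on_le)
  thus ?thesis using card_maps_on_small_subsets[OF assms] unfolding scount_def by linarith
qed

section \<open>Rank-2 matroids defined by a colouring\<close>

text \<open>The truncation to rank 2 of the partition matroid whose blocks are the fibres of \<open>f\<close>.\<close>

definition rank2_partition :: "'a set \<Rightarrow> ('a \<Rightarrow> 'b) \<Rightarrow> 'a set set" where
  "rank2_partition E f = {X. X \<subseteq> E \<and> card X \<le> 2 \<and> inj_on f X}"

lemma rank2_partition_augment:
  assumes fin: "finite E" and X: "X \<in> rank2_partition E f" and Y: "Y \<in> rank2_partition E f"
    and lt: "card X < card Y"
  shows "\<exists>y\<in>Y - X. insert y X \<in> rank2_partition E f"
proof -
  have "finite X" using X fin finite_subset unfolding rank2_partition_def by blast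
  have "card Y \<le> 2" using Y unfolding rank2_partition_def by simp
  hence "card X = 0 \<or> card X = 1" using lt by linarith
  thus ?thesis
  proof (elim disjE)
    assume "card X = 0"
    hence "X = {}" using \<open>finite X\<close> by simp
    moreover obtain y where "y \<in> Y" using lt by fastforce
    ultimately show ?thesis using Y unfolding rank2_partition_def by auto
  next
    assume "card X = 1"
    then obtain x where x: "X = {x}" by (rule card_1_singletonE)
    have "card Y = 2" using lt \<open>card Y \<le> 2\<close> \<open>card X = 1\<close> by linarith
    then obtain y1 y2 where Y2: "Y = {y1, y2}" "y1 \<noteq> y2" by (meson card_2_iff)
    hence "f y1 \<noteq> f y2" using Y unfolding rank2_partition_def inj_on_def by blast
    hence "f y1 \<noteq> f x \<or> f y2 \<noteq> f x" by metis
    then obtain y where y: "y \<in> Y" "f y \<noteq> f x" using Y2(1) by blast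
    hence "y \<noteq> x" by blast
    moreover have "insert y X \<in> rank2_partition E f"
      using x y X Y \<open>y \<noteq> x\<close> unfolding rank2_partition_def by auto
    ultimately show ?thesis using x y by blast
  qed
qed

lemma matroid_indep_rank2_partition:
  assumes fin: "finite E"
  shows "matroid_indep E (rank2_partition E f)"
proof -
  let ?P = "rank2_partition E f"
  have sub: "\<forall>X\<in>?P. X \<subseteq> E" and empty: "{} \<in> ?P" unfolding rank2_partition_def by auto
  have down: "\<forall>X Y. X \<in> ?P \<and> Y \<subseteq> X \<longrightarrow> Y \<in> ?P"
  proof (intro allI impI, elim conjE)
    fix X Y assume X: "X \<in> ?P" and "Y \<subseteq> X"
    have "finite X" using X fin finite_subset unfolding rank2_partition_def by blast
    hence "card Y \<le> card X" using card_mono \<open>Y \<subseteq> X\<close> by blast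
    moreover have "inj_on f Y" using X \<open>Y \<subseteq> X\<close> inj_on_subset unfolding rank2_partition_def by blast
    ultimately show "Y \<in> ?P" using X \<open>Y \<subseteq> X\<close> unfolding rank2_partition_def by auto
  qed
  show ?thesis unfolding matroid_indep_def
    using fin sub empty down rank2_partition_augment[OF fin] by blast
qed

lemma matroid_rank_rank2_partition:
  assumes fin: "finite E" and ab: "a \<in> E" "b \<in> E" "f a \<noteq> f b"
  shows "matroid_rank (rank2_partition E f) = 2"
  unfolding matroid_rank_def
proof (rule Max_eqI)
  show "finite (card ` rank2_partition E f)"
    using matroid_indep_finite[OF matroid_indep_rank2_partition[OF fin]] by blast
  show "y \<le> 2" if "y \<in> card ` rank2_partition E f" for y
    using that unfolding rank2_partition_def by auto
  have "a \<noteq> b" using ab(3) by blast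
  hence "{a, b} \<in> rank2_partition E f" using ab unfolding rank2_partition_def by auto
  thus "2 \<in> card ` rank2_partition E f" using \<open>a \<noteq> b\<close> by (intro rev_image_eqI) auto
qed

lemma paving_rank2_partition:
  assumes fin: "finite E" and ab: "a \<in> E" "b \<in> E" "f a \<noteq> f b"
  shows "paving E (rank2_partition E f)"
  unfolding paving_def
proof (intro allI impI)
  fix C assume "matroid_circuit E (rank2_partition E f) C"
  hence C: "C \<subseteq> E" "C \<notin> rank2_partition E f" unfolding matroid_circuit_def by auto
  have "\<not> card C \<le> 1"
  proof
    assume "card C \<le> 1"
    hence "inj_on f C" unfolding inj_on_def using card_le_Suc0_iff_eq[OF finite_subset[OF C(1) fin]] by auto
    thus False using C \<open>card C \<le> 1\<close> unfolding rank2_partition_def by auto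
  qed
  thus "matroid_rank (rank2_partition E f) \<le> card C"
    using matroid_rank_rank2_partition[OF assms] by simp
qed

lemma paving_dual_rank2_partition:
  assumes fin: "finite E" and ab: "a \<in> E" "b \<in> E" "f a \<noteq> f b"
    and fibre: "\<And>v. card {x \<in> E. f x = v} \<le> 2"
  shows "paving E (dual_indep E (rank2_partition E f))"
  unfolding paving_def
proof (intro allI impI)
  let ?P = "rank2_partition E f"
  have M: "matroid_indep E ?P" using matroid_indep_rank2_partition[OF fin] .
  have rank: "matroid_rank ?P = 2" using matroid_rank_rank2_partition[OF assms(1-4)] .
  fix C assume "matroid_circuit E (dual_indep E ?P) C"
  hence C: "C \<subseteq> E" "C \<notin> dual_indep E ?P" unfolding matroid_circuit_def by auto
  have "card (E - C) \<le> 2"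
  proof (rule ccontr)
    assume big: "\<not> card (E - C) \<le> 2"
    hence "E - C \<noteq> {}" by (metis card.empty zero_le)
    then obtain u where u: "u \<in> E - C" by blast
    have "\<not> E - C \<subseteq> {x \<in> E. f x = f u}"
      using big fibre[of "f u"] card_mono[of "{x \<in> E. f x = f u}" "E - C"] fin by auto
    then obtain v where v: "v \<in> E - C" "f v \<noteq> f u" by blast
    hence "u \<noteq> v" by blast
    hence "{u, v} \<in> ?P" "card {u, v} = 2" using u v unfolding rank2_partition_def by auto
    hence "matroid_basis ?P {u, v}" using matroid_basis_if_card_rank[OF M] rank by simp
    hence "C \<in> dual_indep E ?P" using C(1) u v unfolding dual_indep_def by blast
    thus False using C(2) by blast
  qed
  moreover have "card (E - C) = card E - card C"
    using C(1) fin by (simp add: card_Diff_subset finite_subset)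
  moreover have "card C \<le> card E" using C(1) fin by (rule card_mono[rotated])
  ultimately show "matroid_rank (dual_indep E ?P) \<le> card C"
    using matroid_rank_dual[OF M] rank by linarith
qed

lemma sparse_paving_rank2_partition:
  assumes "finite E" "a \<in> E" "b \<in> E" "f a \<noteq> f b" "\<And>v. card {x \<in> E. f x = v} \<le> 2"
  shows "sparse_paving E (rank2_partition E f)"
  using paving_rank2_partition[OF assms(1-4)] paving_dual_rank2_partition[OF assms]
  unfolding sparse_paving_def by blast

lemma rank2_partition_eqD:
  fixes f g :: "'a \<Rightarrow> 'b"
  assumes eq: "rank2_partition E f = rank2_partition E g" and "x \<in> E" "y \<in> E"
  shows "f x = f y \<longleftrightarrow> g x = g y"
proof (cases "x = y")
  case False
  have pair: "{x, y} \<in> rank2_partition E h \<longleftrightarrow> h x \<noteq> h y" for h :: "'a \<Rightarrow> 'b"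
    using False assms(2,3) unfolding rank2_partition_def by auto
  show ?thesis using pair[of f] pair[of g] eq by simp
qed simp

lemma card_fibre_override_on_id_le_2:
  assumes fin: "finite E" and inj: "inj_on g A"
  shows "card {x \<in> E. override_on id g A x = v} \<le> 2"
proof -
  let ?S = "{x \<in> E \<inter> A. g x = v}"
  have "finite ?S" using fin by simp
  hence "card ?S \<le> 1" using inj card_le_Suc0_iff_eq[of ?S] unfolding inj_on_def by auto
  have "{x \<in> E. override_on id g A x = v} \<subseteq> insert v ?S" by (auto simp: override_on_def)
  hence "card {x \<in> E. override_on id g A x = v} \<le> card (insert v ?S)"
    using \<open>finite ?S\<close> by (intro card_mono) auto
  also have "\<dots> \<le> Suc (card ?S)" using \<open>finite ?S\<close> by (simp add: card_insert_if)
  finally show ?thesis using \<open>card ?S \<le> 1\<close> by linarith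
qed

lemma pcount_ge:
  assumes k: "2 \<le> k" "k \<le> n"
  shows "k ^ (n - k) \<le> pcount n 2"
proof -
  let ?E = "{1..n}" and ?F = "{k<..n} \<rightarrow>\<^sub>E {1..k}"
  let ?ext = "\<lambda>f. override_on id f {k<..n}"
  let ?P = "{I. matroid_indep {1..n} I \<and> matroid_rank I = 2 \<and> paving {1..n} I}"
  have "inj_on (\<lambda>f. rank2_partition ?E (?ext f)) ?F"
  proof (rule inj_onI)
    fix f g assume f: "f \<in> ?F" and g: "g \<in> ?F"
      and eq: "rank2_partition ?E (?ext f) = rank2_partition ?E (?ext g)"
    show "f = g"
    proof (rule PiE_ext[OF f g])
      fix i assume i: "i \<in> {k<..n}"
      have fi: "f i \<in> {1..k}" using f i by blast
      have "?ext f i = ?ext f (f i)" using i fi by simp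
      hence "?ext g i = ?ext g (f i)" using rank2_partition_eqD[OF eq, of i "f i"] i fi k by simp
      thus "f i = g i" using i fi by simp
    qed
  qed
  moreover have "rank2_partition ?E (?ext f) \<in> ?P" for f
  proof -
    have ab: "1 \<in> ?E" "2 \<in> ?E" "?ext f 1 \<noteq> ?ext f 2" using k by auto
    show ?thesis using matroid_indep_rank2_partition[OF finite_atLeastAtMost]
        matroid_rank_rank2_partition[OF finite_atLeastAtMost ab]
        paving_rank2_partition[OF finite_atLeastAtMost ab] by blast
  qed
  ultimately have "card ?F \<le> card ?P"
    by (intro card_inj_on_le finite_matroids) auto
  thus ?thesis by (simp add: pcount_def card_PiE)
qed

lemma scount_ge:
  assumes k: "2 \<le> k" "2 * k \<le> n"
  shows "fact k \<le> scount n 2"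
proof -
  let ?E = "{1..n}" and ?F = "{p. p permutes {1..k}}"
  let ?ext = "\<lambda>p. override_on id (\<lambda>i. p (i - k)) {k<..2 * k}"
  let ?S = "{I. matroid_indep {1..n} I \<and> matroid_rank I = 2 \<and> sparse_paving {1..n} I}"
  have "inj_on (\<lambda>p. rank2_partition ?E (?ext p)) ?F"
  proof (rule inj_onI, rule ext)
    fix p q j assume p: "p \<in> ?F" and q: "q \<in> ?F"
      and eq: "rank2_partition ?E (?ext p) = rank2_partition ?E (?ext q)"
    show "p j = q j"
    proof (cases "j \<in> {1..k}")
      case False
      thus ?thesis using permutes_not_in[of p "{1..k}" j] permutes_not_in[of q "{1..k}" j] p q by simp
    next
      case True
      have pj: "p j \<in> {1..k}" using permutes_in_image[of p "{1..k}" j] p True by simp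
      have "?ext p (j + k) = ?ext p (p j)" using True pj by auto
      hence "?ext q (j + k) = ?ext q (p j)" using rank2_partition_eqD[OF eq, of "j + k" "p j"] True pj k by auto
      thus ?thesis using True pj by auto
    qed
  qed
  moreover have "rank2_partition ?E (?ext p) \<in> ?S" if p: "p permutes {1..k}" for p
  proof -
    have ab: "1 \<in> ?E" "2 \<in> ?E" "?ext p 1 \<noteq> ?ext p 2" using k by auto
    have "inj_on (\<lambda>i. p (i - k)) {k<..2 * k}"
    proof (rule inj_onI)
      fix i j assume "i \<in> {k<..2 * k}" "j \<in> {k<..2 * k}" "p (i - k) = p (j - k)"
      thus "i = j" using injD[OF permutes_inj[OF p]] by fastforce
    qed
    hence "card {x \<in> ?E. ?ext p x = v} \<le> 2" for v
      by (rule card_fibre_override_on_id_le_2[OF finite_atLeastAtMost])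
    thus ?thesis using matroid_indep_rank2_partition[OF finite_atLeastAtMost]
        matroid_rank_rank2_partition[OF finite_atLeastAtMost ab]
        sparse_paving_rank2_partition[OF finite_atLeastAtMost ab] by blast
  qed
  ultimately have "card ?F \<le> card ?S"
    by (intro card_inj_on_le finite_matroids) auto
  thus ?thesis using card_permutations[of "{1..k}" k] by (simp add: scount_def)
qed

section \<open>Asymptotics\<close>

lemma power_div_fact_le_exp:
  fixes x :: real
  assumes "0 \<le> x"
  shows "x ^ k / fact k \<le> exp x"
proof -
  have "(\<Sum>m\<in>{k}. inverse (fact m) * x ^ m) \<le> (\<Sum>m. inverse (fact m) * x ^ m)"
    using assms by (intro sum_le_suminf summable_exp) auto
  thus ?thesis by (simp add: exp_def divide_inverse ac_simps)
qed

lemma ln_fact_ge: "1 \<le> k \<Longrightarrow> real k * ln (real k) - real k \<le> ln (fact k)"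
proof -
  assume k: "1 \<le> k"
  have pos: "0 < real k ^ k" using k by simp
  have "real k ^ k / exp (real k) \<le> fact k"
    using power_div_fact_le_exp[of "real k" k] by (simp add: field_simps)
  hence "ln (real k ^ k / exp (real k)) \<le> ln (fact k)"
    using pos by (subst ln_le_cancel_iff) auto
  moreover have "ln (real k ^ k / exp (real k)) = real k * ln (real k) - real k"
    using pos k by (simp add: ln_div ln_realpow)
  ultimately show ?thesis by simp
qed

lemma ln_scount_bounds:
  assumes n: "4 \<le> n"
  shows "(real n - 1) / 2 * ln ((real n - 1) / 2) - real n / 2 \<le> ln (real (scount n 2))"
    and "ln (real (scount n 2)) \<le> real n * ln 2 + real n / 2 * ln (real n)"
proof -
  define K where "K = n div 2"
  have K: "2 \<le> K" "2 * K \<le> n" using n unfolding K_def by auto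
  have "n = 2 * K + n mod 2" unfolding K_def by simp
  hence "real n = 2 * real K + real (n mod 2)" by (metis of_nat_add of_nat_mult of_nat_numeral)
  moreover have "real (n mod 2) \<le> 1" by simp
  ultimately have K_real: "(real n - 1) / 2 \<le> real K \<and> real K \<le> real n / 2" by auto
  have fact_le: "(fact K :: real) \<le> real (scount n 2)"
    using scount_ge[OF K] by (metis of_nat_fact of_nat_le_iff)
  have pos: "0 < real (scount n 2)" using fact_le by (metis fact_gt_zero order_less_le_trans)
  have "(real n - 1) / 2 * ln ((real n - 1) / 2) \<le> real K * ln (real K)"
    using K_real n by (intro mult_mono) auto
  hence "(real n - 1) / 2 * ln ((real n - 1) / 2) - real n / 2 \<le> real K * ln (real K) - real K"
    using K_real by linarith
  also have "\<dots> \<le> ln (fact K)" using ln_fact_ge K by simp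
  also have "\<dots> \<le> ln (real (scount n 2))" using ln_mono[OF fact_le] by simp
  finally show "(real n - 1) / 2 * ln ((real n - 1) / 2) - real n / 2 \<le> ln (real (scount n 2))" .
  have "real (scount n 2) \<le> real (2 ^ n * n ^ (n div 2))"
    using scount_le[of n] n by (simp only: of_nat_le_iff)
  hence "real (scount n 2) \<le> 2 ^ n * real n ^ (n div 2)" by simp
  hence "ln (real (scount n 2)) \<le> ln (2 ^ n * real n ^ (n div 2))" using pos by simp
  also have "\<dots> = real n * ln 2 + real (n div 2) * ln (real n)"
    using n by (simp add: ln_mult ln_realpow)
  also have "\<dots> \<le> real n * ln 2 + real n / 2 * ln (real n)"
    using K_real n unfolding K_def by (intro add_left_mono mult_right_mono) auto
  finally show "ln (real (scount n 2)) \<le> real n * ln 2 + real n / 2 * ln (real n)" .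
qed

lemma ln_scount_asymp: "(\<lambda>n. ln (real (scount n 2))) \<sim>[at_top] (\<lambda>n. real n * ln (real n) / 2)"
proof (rule asymp_equiv_sandwich_real[where l = "\<lambda>n. (real n - 1) / 2 * ln ((real n - 1) / 2) - real n / 2"
      and u = "\<lambda>n. real n * ln 2 + real n / 2 * ln (real n)"])
  show "(\<lambda>n. (real n - 1) / 2 * ln ((real n - 1) / 2) - real n / 2) \<sim>[at_top] (\<lambda>n. real n * ln (real n) / 2)"
    by real_asymp
  show "(\<lambda>n. real n * ln 2 + real n / 2 * ln (real n)) \<sim>[at_top] (\<lambda>n. real n * ln (real n) / 2)"
    by real_asymp
  show "\<forall>\<^sub>F n in at_top. ln (real (scount n 2)) \<in>
      {(real n - 1) / 2 * ln ((real n - 1) / 2) - real n / 2 .. real n * ln 2 + real n / 2 * ln (real n)}"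
    using eventually_ge_at_top[of 4] by eventually_elim (simp only: atLeastAtMost_iff ln_scount_bounds)
qed

text \<open>The choice \<open>k = \<lfloor>n / ln n\<rfloor>\<close> makes \<open>k^(n-k)\<close> as large as \<open>n^(n(1 - o(1)))\<close>.\<close>

lemma eventually_exists_power_bound:
  "\<forall>\<^sub>F n in at_top. \<exists>k. 2 \<le> k \<and> k \<le> n \<and>
     (real n - real n / ln (real n)) * ln (real n / ln (real n) - 1) \<le> real (n - k) * ln (real k)"
proof -
  have "\<forall>\<^sub>F n in at_top. 3 \<le> real n / ln (real n)" by real_asymp
  moreover have "\<forall>\<^sub>F n in at_top. real n / ln (real n) \<le> real n" by real_asymp
  ultimately show ?thesis
  proof eventually_elim
    case (elim n)
    define x where "x = real n / ln (real n)"
    define k where "k = nat \<lfloor>x\<rfloor>"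
    have x: "3 \<le> x" "x \<le> real n" using elim unfolding x_def by auto
    have "real_of_int \<lfloor>x\<rfloor> \<le> x \<and> x - 1 < real_of_int \<lfloor>x\<rfloor>" by linarith
    moreover have "real k = real_of_int \<lfloor>x\<rfloor>" using x unfolding k_def by simp
    ultimately have k: "real k \<le> x \<and> x - 1 \<le> real k" by linarith
    hence "2 \<le> k \<and> k \<le> n" using x by linarith
    hence "2 \<le> k" "k \<le> n" by simp_all
    moreover have "(real n - x) * ln (x - 1) \<le> real (n - k) * ln (real k)"
      using k x \<open>k \<le> n\<close> by (intro mult_mono) auto
    ultimately show ?case unfolding x_def by blast
  qed
qed

lemma ln_asymp_equiv_n_ln_n:
  fixes f :: "nat \<Rightarrow> nat"
  assumes lower: "\<And>n k. 2 \<le> k \<Longrightarrow> k \<le> n \<Longrightarrow> k ^ (n - k) \<le> f n"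
    and upper: "\<And>n. f n \<le> (n + 1) ^ n"
  shows "(\<lambda>n. ln (real (f n))) \<sim>[at_top] (\<lambda>n. real n * ln (real n))"
proof (rule asymp_equiv_sandwich_real[where l = "\<lambda>n. (real n - real n / ln (real n)) * ln (real n / ln (real n) - 1)"
      and u = "\<lambda>n. real n * ln (real n + 1)"])
  show "(\<lambda>n. (real n - real n / ln (real n)) * ln (real n / ln (real n) - 1)) \<sim>[at_top] (\<lambda>n. real n * ln (real n))"
    by real_asymp
  show "(\<lambda>n. real n * ln (real n + 1)) \<sim>[at_top] (\<lambda>n. real n * ln (real n))"
    by real_asymp
  show "\<forall>\<^sub>F n in at_top. ln (real (f n)) \<in>
      {(real n - real n / ln (real n)) * ln (real n / ln (real n) - 1) .. real n * ln (real n + 1)}"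
    using eventually_exists_power_bound
  proof eventually_elim
    case (elim n)
    then obtain k where k: "2 \<le> k" "k \<le> n"
      and l: "(real n - real n / ln (real n)) * ln (real n / ln (real n) - 1) \<le> real (n - k) * ln (real k)"
      by blast
    have pow: "real k ^ (n - k) \<le> real (f n)" using lower[OF k] by (metis of_nat_le_iff of_nat_power)
    have pos: "0 < real k ^ (n - k)" using k by simp
    have "real (n - k) * ln (real k) = ln (real k ^ (n - k))" using k by (simp add: ln_realpow)
    also have "\<dots> \<le> ln (real (f n))" using ln_mono[OF pow pos] .
    finally have lo: "real (n - k) * ln (real k) \<le> ln (real (f n))" .
    have "real (f n) \<le> (real n + 1) ^ n" using upper[of n] by (metis of_nat_1 of_nat_add of_nat_le_iff of_nat_power)
    moreover have "0 < real (f n)" using pow pos by linarith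
    ultimately have "ln (real (f n)) \<le> ln ((real n + 1) ^ n)" by (rule ln_mono)
    also have "\<dots> = real n * ln (real n + 1)" by (simp add: ln_realpow)
    finally show ?case using l lo by simp
  qed
qed

lemma asymp_equiv_log2: "(\<lambda>x. ln (f x)) \<sim>[F] g \<Longrightarrow> (\<lambda>x. log 2 (f x)) \<sim>[F] (\<lambda>x. g x / ln 2)"
  unfolding log_def by (intro asymp_equiv_intros)

theorem theorem1p1:
  shows "((\<lambda>n. 2 * log 2 (real (scount n 2))) \<sim>[at_top] (\<lambda>n. log 2 (real (pcount n 2)))) \<and>
         ((\<lambda>n. log 2 (real (pcount n 2))) \<sim>[at_top] (\<lambda>n. log 2 (real (mcount n 2))))"
proof -
  let ?L = "\<lambda>n::nat. real n * ln (real n) / ln 2"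
  have "(\<lambda>n. 2 * log 2 (real (scount n 2))) \<sim>[at_top] (\<lambda>n. 2 * (real n * ln (real n) / 2 / ln 2))"
    by (intro asymp_equiv_intros asymp_equiv_log2 ln_scount_asymp)
  hence s: "(\<lambda>n. 2 * log 2 (real (scount n 2))) \<sim>[at_top] ?L" by simp
  have p: "(\<lambda>n. log 2 (real (pcount n 2))) \<sim>[at_top] ?L"
    by (intro asymp_equiv_log2 ln_asymp_equiv_n_ln_n pcount_ge order_trans[OF pcount_le_mcount mcount_le])
  have m: "(\<lambda>n. log 2 (real (mcount n 2))) \<sim>[at_top] ?L"
    by (intro asymp_equiv_log2 ln_asymp_equiv_n_ln_n order_trans[OF pcount_ge pcount_le_mcount] mcount_le)
  show ?thesis
    using asymp_equiv_trans[OF s asymp_equiv_symI[OF p]] asymp_equiv_trans[OF p asymp_equiv_symI[OF m]]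
    by blast
qed

end
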